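(* Let $d\ge 2$, $\mu\in\mathbb{S}^{d-1}$, $\kappa\ge 0$, and let $X$ follow the Power Spherical distribution with direction $\mu$ and concentration $\kappa$. With $\alpha=\frac{d-1}{2}+\kappa$, $\beta=\frac{d-1}{2}$ and $N_X(\kappa,d) = 2^{\alpha+\beta}\pi^{\beta}\frac{\Gamma(\alpha)}{\Gamma(\alpha+\beta)}$, the differential entropy of $X$ (with respect to surface measure on $\mathbb{S}^{d-1}$) is $$\operatorname{H}(X) = \log N_X(\kappa,d) - \kappa\big(\log 2 + \psi(\alpha) - \psi(\alpha+\beta)\big).$$
   Context: The Power Spherical distribution with direction $\mu\in\mathbb{S}^{d-1}$ and concentration $\kappa\ge 0$ is the probability distribution on $\mathbb{S}^{d-1}=\{x\in\mathbb{R}^d:\|x\|_2=1\}$ with density (w.r.t. surface measure) proportional to $(1+\mu^\top x)^\kappa$. $\psi(x)=\frac{d}{dx}\log\Gamma(x)$ is the digamma function; differential entropy is $\operatorname{H}(X) = -\mathbb{E}[\log p_X(X)]$. *)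

theory Defs
  imports "HOL-Analysis.Analysis"
begin

text \<open>Surface (area) measure on the unit sphere of a Euclidean space of dimension d,
  defined as the cone measure: sigma(A) = d * lambda({t x | 0 < t < 1, x in A}),
  i.e. the push-forward of d times Lebesgue measure on the punctured open unit ball
  under the radial projection x |-> x / |x|.  This coincides with the
  (d-1)-dimensional Hausdorff measure on the sphere.\<close>
definition sphere_surface :: "('a::euclidean_space) measure" where
  "sphere_surface =
     distr (density (restrict_space lborel (ball 0 1 - {0})) (\<lambda>_. ennreal (real DIM('a))))
           (restrict_space borel (sphere 0 1))
           (\<lambda>x. (1 / norm x) *\<^sub>R x)"

definition ps_unnorm :: "'a::euclidean_space \<Rightarrow> real \<Rightarrow> 'a \<Rightarrow> real" where
  "ps_unnorm mu kappa x = (1 + mu \<bullet> x) powr kappa"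

definition ps_density :: "'a::euclidean_space \<Rightarrow> real \<Rightarrow> 'a \<Rightarrow> real" where
  "ps_density mu kappa x =
     ps_unnorm mu kappa x / (\<integral>y. ps_unnorm mu kappa y \<partial>(sphere_surface :: 'a measure))"

definition diff_entropy :: "'b measure \<Rightarrow> ('b \<Rightarrow> real) \<Rightarrow> real" where
  "diff_entropy M p = - (\<integral>x. p x * ln (p x) \<partial>M)"

end

(*
  The density depends on x only through t = mu . x.  Lebesgue measure is invariant under
  orthogonal maps, so mu may be taken to be a basis vector; the squared norm of the remaining
  d - 1 coordinates has an explicit density, and integrating it out shows that the cone
  measure on the sphere pushes forward along x |-> mu . x to (1 - t^2) powr (beta - 1) dt on
  ]-1, 1[, times the area 2 pi^beta / Gamma beta of the unit sphere one dimension lower.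
  Substituting t = 2 s - 1 turns the normalising integral of (1 + t) powr kappa into a Beta
  integral B(alpha, beta), and the logarithmic moment into -d/d alpha of it, namely
  B(alpha, beta) (psi(alpha + beta) - psi(alpha)), obtained by monotone convergence of
  difference quotients.  The entropy of f / Z is ln Z - (integral of f ln f) / Z.
*)
theory Submission
  imports Defs
begin

section \<open>Orthogonal invariance of Lebesgue measure\<close>

lemma null_sets_lborel_negligible:
  fixes N :: "'a::euclidean_space set"
  assumes "N \<in> sets borel" "negligible N"
  shows "N \<in> null_sets lborel"
  using assms by (simp add: negligible_iff_null_sets null_sets_completion_iff)

lemma borel_measurable_orthogonal_transformation:
  fixes f :: "'a::euclidean_space \<Rightarrow> 'a"
  assumes "orthogonal_transformation f"
  shows "f \<in> borel_measurable borel"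
  using assms
  by (intro borel_measurable_continuous_onI linear_continuous_on)
    (simp add: linear_conv_bounded_linear[symmetric] orthogonal_transformation_linear)

lemma image_orthogonal_transformation_eq_vimage_inv:
  fixes f :: "'a::euclidean_space \<Rightarrow> 'a"
  assumes "orthogonal_transformation f"
  shows "f ` A = inv f -` A"
  using orthogonal_transformation_bij[OF assms]
  by (metis bij_vimage_eq_inv_image bij_imp_bij_inv inv_inv_eq)

lemma emeasure_disjoint_UN_Un_null:
  assumes "countable C" "disjoint_family_on B C" "\<And>i. i \<in> C \<Longrightarrow> B i \<in> sets M"
    and "N \<in> null_sets M"
  shows "emeasure M ((\<Union>i\<in>C. B i) \<union> N) = (\<integral>\<^sup>+i. emeasure M (B i) \<partial>count_space C)"
proof -
  have "(\<Union>i\<in>C. B i) \<in> sets M"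
    using assms(1,3) by (intro sets.countable_UN'') auto
  then have "emeasure M ((\<Union>i\<in>C. B i) \<union> N) = emeasure M (\<Union>i\<in>C. B i)"
    using assms(4) by (rule emeasure_Un_null_set)
  also have "\<dots> = (\<integral>\<^sup>+i. emeasure M (B i) \<partial>count_space C)"
    using assms(1-3) by (intro emeasure_UN_countable) auto
  finally show ?thesis .
qed

text \<open>An open set is, up to a null set, a countable disjoint union of balls (Vitali), and
  an orthogonal transformation maps balls to balls of the same radius.\<close>
lemma emeasure_lborel_orthogonal_image_open:
  fixes f :: "'a::euclidean_space \<Rightarrow> 'a"
  assumes f: "orthogonal_transformation f" and U: "open U"
  shows "emeasure lborel (f ` U) = emeasure lborel U"
proof -
  define K where "K = {p :: 'a \<times> real. 0 < snd p \<and> ball (fst p) (snd p) \<subseteq> U}"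
  obtain C where C: "countable C" "C \<subseteq> K"
    and disj: "pairwise (\<lambda>i j. disjnt (ball (fst i) (snd i)) (ball (fst j) (snd j))) C"
    and neg: "negligible (U - (\<Union>i\<in>C. ball (fst i) (snd i)))"
  proof (rule Vitali_covering_theorem_balls[of U K fst snd])
    fix x and d :: real
    assume "x \<in> U" "0 < d"
    then obtain e where "e > 0" "ball x e \<subseteq> U"
      using U open_contains_ball by blast
    with \<open>0 < d\<close> show "\<exists>i. i \<in> K \<and> x \<in> ball (fst i) (snd i) \<and> snd i < d"
      by (intro exI[of _ "(x, min e (d/2))"]) (auto simp: K_def)
  qed blast
  define B where "B i = ball (fst i) (snd i)" for i :: "'a \<times> real"
  define N where "N = U - (\<Union>i\<in>C. B i)"
  have U_eq: "U = (\<Union>i\<in>C. B i) \<union> N"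
    using C(2) by (auto simp: N_def B_def K_def)
  have fU_eq: "f ` U = (\<Union>i\<in>C. f ` B i) \<union> f ` N"
    by (subst U_eq) auto
  have N_borel: "N \<in> sets borel"
    using U C(1) by (auto simp: N_def B_def intro!: sets.countable_UN'')
  have N_null: "N \<in> null_sets lborel"
    using N_borel neg by (intro null_sets_lborel_negligible) (simp_all add: N_def B_def)
  have fN_null: "f ` N \<in> null_sets lborel"
  proof (rule null_sets_lborel_negligible)
    show "f ` N \<in> sets borel"
      using measurable_sets_borel[OF borel_measurable_orthogonal_transformation N_borel]
      by (simp add: f orthogonal_transformation_inv image_orthogonal_transformation_eq_vimage_inv)
    show "negligible (f ` N)"
      using neg f by (intro negligible_differentiable_image_negligible linear_imp_differentiable_on)
        (simp_all add: N_def B_def orthogonal_transformation_linear)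
  qed
  have disj_B: "disjoint_family_on B C"
    using disj by (auto simp: disjoint_family_on_def pairwise_def disjnt_def B_def)
  then have disj_fB: "disjoint_family_on (\<lambda>i. f ` B i) C"
    using orthogonal_transformation_inj[OF f]
    by (auto simp: disjoint_family_on_def image_Int[symmetric])
  have "emeasure lborel (f ` U) = (\<integral>\<^sup>+i. emeasure lborel (f ` B i) \<partial>count_space C)"
    unfolding fU_eq by (rule emeasure_disjoint_UN_Un_null[OF C(1) disj_fB _ fN_null])
      (simp add: B_def image_orthogonal_transformation_ball[OF f])
  also have "\<dots> = (\<integral>\<^sup>+i. emeasure lborel (B i) \<partial>count_space C)"
    using C(2) by (intro nn_integral_cong)
      (auto simp: B_def K_def emeasure_ball image_orthogonal_transformation_ball[OF f])
  also have "\<dots> = emeasure lborel U"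
    by (subst U_eq, rule emeasure_disjoint_UN_Un_null[symmetric, OF C(1) disj_B _ N_null])
      (simp add: B_def)
  finally show ?thesis .
qed

lemma distr_lborel_orthogonal_transformation:
  fixes f :: "'a::euclidean_space \<Rightarrow> 'a"
  assumes f: "orthogonal_transformation f"
  shows "distr lborel borel f = lborel"
proof -
  have open_eq: "emeasure (distr lborel borel f) X = emeasure lborel X" if "open X" for X
  proof -
    have "emeasure (distr lborel borel f) X = emeasure lborel (f -` X)"
      using that borel_measurable_orthogonal_transformation[OF f] by (subst emeasure_distr) auto
    also have "f -` X = inv f ` X"
      by (simp add: f orthogonal_transformation_bij bij_vimage_eq_inv_image)
    also have "emeasure lborel (inv f ` X) = emeasure lborel X"
      using f that by (intro emeasure_lborel_orthogonal_image_open orthogonal_transformation_inv)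
    finally show ?thesis .
  qed
  show ?thesis
  proof (rule measure_eqI_generator_eq[where E="{S. open S}" and \<Omega>=UNIV and A="\<lambda>i. ball 0 (real i)"])
    show "(\<Union>i. ball (0::'a) (real i)) = UNIV"
      by (auto simp: reals_Archimedean2)
    show "emeasure (distr lborel borel f) (ball 0 (real i)) \<noteq> \<infinity>" for i
      using emeasure_lborel_ball_finite[of "0::'a" "real i"] by (simp add: open_eq less_top)
  qed (auto simp: Int_stable_def sets_borel open_eq)
qed

section \<open>Integrals depending on one coordinate and the norm\<close>

lemma borel_measurable_case_prod_compose:
  fixes \<Phi> :: "real \<Rightarrow> real \<Rightarrow> ennreal"
  assumes "case_prod \<Phi> \<in> borel_measurable borel"
    and "f \<in> borel_measurable M" "g \<in> borel_measurable M"
  shows "(\<lambda>x. \<Phi> (f x) (g x)) \<in> borel_measurable M"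
  using measurable_compose[OF measurable_Pair[OF assms(2,3)], of "case_prod \<Phi>"] assms(1)
  by (simp add: borel_prod)

lemma orthogonal_transformation_exists_unit:
  fixes a b :: "'a::euclidean_space"
  assumes a: "norm a = 1" and b: "norm b = 1"
  obtains f where "orthogonal_transformation f" "f a = b"
proof (cases "a = b")
  case True
  then show ?thesis using that orthogonal_transformation_id by blast
next
  case False
  define v where "v = a - b"
  have vv: "v \<bullet> v \<noteq> 0" using False by (simp add: v_def)
  define f where "f x = x - (2 * (x \<bullet> v) / (v \<bullet> v)) *\<^sub>R v" for x
  have "linear f"
    unfolding f_def by (rule linearI) (simp_all add: inner_add_left add_divide_distrib algebra_simps)
  moreover have "f x \<bullet> f y = x \<bullet> y" for x y
    using vv by (simp add: f_def inner_diff_left inner_diff_right inner_commute field_simps)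
  ultimately have "orthogonal_transformation f"
    by (simp add: orthogonal_transformation_def)
  moreover have "f a = b"
  proof -
    have "a \<bullet> a = 1" "b \<bullet> b = 1" using a b by (simp_all add: dot_square_norm)
    then have "v \<bullet> v = 2 * (a \<bullet> v)"
      by (simp add: v_def inner_diff_left inner_diff_right inner_commute)
    then show ?thesis using vv by (simp add: f_def v_def)
  qed
  ultimately show ?thesis using that by blast
qed

lemma nn_integral_lborel_inner_unit_invariant:
  fixes u v :: "'a::euclidean_space" and \<Phi> :: "real \<Rightarrow> real \<Rightarrow> ennreal"
  assumes u: "norm u = 1" and v: "norm v = 1"
    and \<Phi>: "case_prod \<Phi> \<in> borel_measurable borel"
  shows "(\<integral>\<^sup>+x. \<Phi> (u \<bullet> x) (x \<bullet> x) \<partial>lborel) = (\<integral>\<^sup>+x. \<Phi> (v \<bullet> x) (x \<bullet> x) \<partial>lborel)"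
proof -
  obtain f where f: "orthogonal_transformation f" and fv: "f v = u"
    using orthogonal_transformation_exists_unit[OF v u] by blast
  have [measurable]: "f \<in> borel_measurable borel"
    using f by (rule borel_measurable_orthogonal_transformation)
  have "(\<integral>\<^sup>+x. \<Phi> (u \<bullet> x) (x \<bullet> x) \<partial>lborel) = (\<integral>\<^sup>+x. \<Phi> (u \<bullet> x) (x \<bullet> x) \<partial>distr lborel borel f)"
    by (simp add: distr_lborel_orthogonal_transformation[OF f])
  also have "\<dots> = (\<integral>\<^sup>+x. \<Phi> (u \<bullet> f x) (f x \<bullet> f x) \<partial>lborel)"
    by (rule nn_integral_distr) (auto intro: borel_measurable_case_prod_compose[OF \<Phi>])
  also have "\<dots> = (\<integral>\<^sup>+x. \<Phi> (v \<bullet> x) (x \<bullet> x) \<partial>lborel)"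
    using f by (simp add: fv[symmetric] orthogonal_transformation_def)
  finally show ?thesis .
qed

lemma nn_integral_lborel_Basis_split:
  fixes b :: "'a::euclidean_space" and \<Phi> :: "real \<Rightarrow> real \<Rightarrow> ennreal"
  assumes b: "b \<in> Basis" and \<Phi>: "case_prod \<Phi> \<in> borel_measurable borel"
  shows "(\<integral>\<^sup>+x. \<Phi> (b \<bullet> x) (x \<bullet> x) \<partial>lborel) =
    (\<integral>\<^sup>+s. \<integral>\<^sup>+y. \<Phi> s (s\<^sup>2 + (\<Sum>i\<in>Basis - {b}. (y i)\<^sup>2)) \<partial>(\<Pi>\<^sub>M i\<in>Basis - {b}. lborel) \<partial>lborel)"
proof -
  interpret product_sigma_finite "\<lambda>_. lborel :: real measure"
    by standard
  define I where "I = Basis - {b}"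
  have Basis_eq: "Basis = insert b I" and bI: "b \<notin> I" "finite I"
    using b by (auto simp: I_def)
  define T where "T f = (\<Sum>i\<in>Basis. f i *\<^sub>R i :: 'a)" for f
  have T_measurable: "T \<in> borel_measurable (\<Pi>\<^sub>M i\<in>Basis. lborel)"
    unfolding T_def by measurable
  have inner_T_Basis: "i \<bullet> T f = f i" if "i \<in> Basis" for i f
    using that by (simp add: T_def inner_commute[of i])
  have sqnorm_T: "T f \<bullet> T f = (\<Sum>i\<in>Basis. (f i)\<^sup>2)" for f
  proof -
    have "T f \<bullet> T f = (\<Sum>i\<in>Basis. f i * (i \<bullet> T f))"
      by (subst (1) T_def) (simp add: inner_sum_left)
    also have "\<dots> = (\<Sum>i\<in>Basis. (f i)\<^sup>2)"
      by (intro sum.cong) (simp_all add: inner_T_Basis power2_eq_square)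
    finally show ?thesis .
  qed
  have "(\<integral>\<^sup>+x. \<Phi> (b \<bullet> x) (x \<bullet> x) \<partial>lborel) =
      (\<integral>\<^sup>+x. \<Phi> (b \<bullet> x) (x \<bullet> x) \<partial>distr (\<Pi>\<^sub>M i\<in>Basis. lborel) borel T)"
    unfolding T_def by (simp flip: lborel_eq)
  also have "\<dots> = (\<integral>\<^sup>+f. \<Phi> (b \<bullet> T f) (T f \<bullet> T f) \<partial>(\<Pi>\<^sub>M i\<in>Basis. lborel))"
    by (rule nn_integral_distr[OF T_measurable])
      (auto intro: borel_measurable_case_prod_compose[OF \<Phi>])
  also have "\<dots> = (\<integral>\<^sup>+f. \<Phi> (f b) (\<Sum>i\<in>Basis. (f i)\<^sup>2) \<partial>(\<Pi>\<^sub>M i\<in>Basis. lborel))"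
    using b by (simp only: inner_T_Basis sqnorm_T)
  also have "\<dots> = (\<integral>\<^sup>+s. \<integral>\<^sup>+y. \<Phi> ((y(b := s)) b) (\<Sum>i\<in>insert b I. ((y(b := s)) i)\<^sup>2)
      \<partial>(\<Pi>\<^sub>M i\<in>I. lborel) \<partial>lborel)"
  proof (unfold Basis_eq, rule product_nn_integral_insert_rev)
    show "(\<lambda>f. \<Phi> (f b) (\<Sum>i\<in>insert b I. (f i)\<^sup>2)) \<in> borel_measurable (\<Pi>\<^sub>M i\<in>insert b I. lborel)"
      by (rule borel_measurable_case_prod_compose[OF \<Phi>]) measurable
  qed (use bI in auto)
  also have "\<dots> = (\<integral>\<^sup>+s. \<integral>\<^sup>+y. \<Phi> s (s\<^sup>2 + (\<Sum>i\<in>I. (y i)\<^sup>2)) \<partial>(\<Pi>\<^sub>M i\<in>I. lborel) \<partial>lborel)"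
  proof (intro nn_integral_cong)
    fix s :: real and y :: "'a \<Rightarrow> real"
    have "(\<Sum>i\<in>I. ((y(b := s)) i)\<^sup>2) = (\<Sum>i\<in>I. (y i)\<^sup>2)"
      using bI by (intro sum.cong) auto
    then show "\<Phi> ((y(b := s)) b) (\<Sum>i\<in>insert b I. ((y(b := s)) i)\<^sup>2) = \<Phi> s (s\<^sup>2 + (\<Sum>i\<in>I. (y i)\<^sup>2))"
      using bI by simp
  qed
  finally show ?thesis unfolding I_def .
qed

lemma emeasure_PiM_sum_squares_le:
  fixes I :: "'i set" and a :: real
  assumes I: "finite I" "I \<noteq> {}"
  shows "emeasure (\<Pi>\<^sub>M i\<in>I. lborel) ({y. (\<Sum>i\<in>I. (y i)\<^sup>2) \<le> a} \<inter> space (\<Pi>\<^sub>M i\<in>I. lborel)) =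
    (if a > 0 then ennreal (unit_ball_vol (card I) * a powr (card I / 2)) else 0)"
proof (cases "a > 0")
  case True
  have "{y. (\<Sum>i\<in>I. (y i)\<^sup>2) \<le> a} = {y. sqrt (\<Sum>i\<in>I. (y i)\<^sup>2) \<le> sqrt a}"
    by simp
  moreover have "sqrt a ^ card I = a powr (card I / 2)"
    using True by (simp add: powr_half_sqrt[symmetric] powr_powr powr_realpow[symmetric])
  ultimately show ?thesis
    using emeasure_cball_aux[OF I(1), of "sqrt a"] True by simp
next
  case False
  interpret product_sigma_finite "\<lambda>_. lborel :: real measure"
    by standard
  have "y \<in> (\<Pi>\<^sub>E i\<in>I. {0})"
    if "y \<in> space (\<Pi>\<^sub>M i\<in>I. lborel)" "(\<Sum>i\<in>I. (y i)\<^sup>2) \<le> a" for y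
  proof -
    have "(\<Sum>i\<in>I. (y i)\<^sup>2) = 0"
      using that(2) False by (intro order.antisym sum_nonneg) auto
    then have "\<forall>i\<in>I. y i = 0"
      using I(1) by (simp add: sum_nonneg_eq_0_iff)
    with that(1) show ?thesis
      by (intro PiE_I) (auto simp: space_PiM PiE_def extensional_def)
  qed
  then have "{y. (\<Sum>i\<in>I. (y i)\<^sup>2) \<le> a} \<inter> space (\<Pi>\<^sub>M i\<in>I. lborel) \<subseteq> (\<Pi>\<^sub>E i\<in>I. {0})"
    by blast
  then have "emeasure (\<Pi>\<^sub>M i\<in>I. lborel) ({y. (\<Sum>i\<in>I. (y i)\<^sup>2) \<le> a} \<inter> space (\<Pi>\<^sub>M i\<in>I. lborel))
      \<le> emeasure (\<Pi>\<^sub>M i\<in>I. lborel) (\<Pi>\<^sub>E i\<in>I. {0 :: real})"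
    by (rule emeasure_mono) (rule sets_PiM_I_finite[OF I(1)], simp)
  also have "\<dots> = 0"
    using I by (subst emeasure_PiM) (auto simp: prod_zero_iff)
  finally show ?thesis
    using False by simp
qed

text \<open>The derivative in \<open>r\<close> of \<open>unit_ball_vol n * r powr (n / 2)\<close>, the volume of the ball of
  radius \<open>sqrt r\<close> in \<open>\<real>\<^sup>n\<close>; it is the density of \<open>|y|\<^sup>2\<close> under Lebesgue measure.\<close>
definition sqnorm_density :: "real \<Rightarrow> real \<Rightarrow> real" where
  "sqnorm_density n r = indicator {0<..} r * (n * unit_ball_vol n / 2) * r powr (n / 2 - 1)"

lemma borel_measurable_sqnorm_density[measurable]: "sqnorm_density n \<in> borel_measurable borel"
  unfolding sqnorm_density_def by measurable

lemma emeasure_density_sqnorm_density_atMost: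
  assumes "n > 0"
  shows "emeasure (density lborel (\<lambda>r. ennreal (sqnorm_density n r))) {..a} =
    (if a > 0 then ennreal (unit_ball_vol n * a powr (n / 2)) else 0)"
proof -
  have "emeasure (density lborel (\<lambda>r. ennreal (sqnorm_density n r))) {..a} =
      (\<integral>\<^sup>+r. ennreal (indicator {0..a} r * (n * unit_ball_vol n / 2 * r powr (n / 2 - 1))) \<partial>lborel)"
    by (subst emeasure_density) (auto intro!: nn_integral_cong simp: indicator_def sqnorm_density_def)
  also have "\<dots> = (if a > 0 then ennreal (unit_ball_vol n * a powr (n / 2)) else 0)"
  proof (cases "a > 0")
    case True
    have "((\<lambda>r. n * unit_ball_vol n / 2 * r powr (n / 2 - 1)) has_integral
        (n * unit_ball_vol n / 2 * (a powr (n / 2 - 1 + 1) / (n / 2 - 1 + 1)))) {0..a}"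
      using assms True by (intro has_integral_mult_right has_integral_powr_from_0) auto
    then have "((\<lambda>r. n * unit_ball_vol n / 2 * r powr (n / 2 - 1)) has_integral
        (unit_ball_vol n * a powr (n / 2))) {0..a}"
      using assms by simp
    from nn_integral_has_integral_lebesgue[OF _ this] show ?thesis
      using assms True by simp
  next
    case False
    then have "ennreal (indicator {0..a} r * (n * unit_ball_vol n / 2 * r powr (n / 2 - 1))) = 0"
      for r :: real
      by (cases "r = 0") (auto simp: indicator_def)
    then show ?thesis
      using False by (simp only: nn_integral_0_iff_AE) simp
  qed
  finally show ?thesis .
qed

lemma distr_PiM_sum_squares:
  fixes I :: "'i set"
  assumes I: "finite I" "I \<noteq> {}"
  shows "distr (\<Pi>\<^sub>M i\<in>I. lborel) borel (\<lambda>y. \<Sum>i\<in>I. (y i)\<^sup>2) =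
    density lborel (\<lambda>r. ennreal (sqnorm_density (card I) r))"
proof (rule measure_eqI_generator_eq[where E="range atMost" and \<Omega>=UNIV and A="\<lambda>i. {..real i}"])
  have card: "real (card I) > 0"
    using I by (simp add: card_gt_0_iff)
  have distr_atMost: "emeasure (distr (\<Pi>\<^sub>M i\<in>I. lborel) borel (\<lambda>y. \<Sum>i\<in>I. (y i)\<^sup>2)) {..a} =
      (if a > 0 then ennreal (unit_ball_vol (card I) * a powr (card I / 2)) else 0)" for a
  proof -
    have "(\<lambda>y. \<Sum>i\<in>I. (y i)\<^sup>2) -` {..a} = {y. (\<Sum>i\<in>I. (y i)\<^sup>2) \<le> a}"
      by auto
    then show ?thesis
      by (subst emeasure_distr) (simp_all add: emeasure_PiM_sum_squares_le[OF I])
  qed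
  show "emeasure (distr (\<Pi>\<^sub>M i\<in>I. lborel) borel (\<lambda>y. \<Sum>i\<in>I. (y i)\<^sup>2)) X =
      emeasure (density lborel (\<lambda>r. ennreal (sqnorm_density (card I) r))) X" if "X \<in> range atMost" for X
    using that card by (auto simp: distr_atMost emeasure_density_sqnorm_density_atMost)
  show "emeasure (distr (\<Pi>\<^sub>M i\<in>I. lborel) borel (\<lambda>y. \<Sum>i\<in>I. (y i)\<^sup>2)) {..real i} \<noteq> \<infinity>" for i
    by (simp add: distr_atMost)
  show "(\<Union>i. {..real i}) = UNIV"
    by (auto simp: real_arch_simple)
qed (auto simp: Int_stable_def borel_eq_atMost)

lemma nn_integral_indicator_Ioo_eq_Icc:
  fixes f :: "real \<Rightarrow> real"
  shows "(\<integral>\<^sup>+x. ennreal (indicator {a<..<b} x * f x) \<partial>lborel) =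
    (\<integral>\<^sup>+x. ennreal (indicator {a..b} x * f x) \<partial>lborel)"
  by (intro nn_integral_cong_AE AE_I[of _ _ "{a, b}"])
    (auto simp: indicator_def emeasure_lborel_countable)

lemma nn_integral_lborel_inner_sqnorm:
  fixes u :: "'a::euclidean_space" and \<Phi> :: "real \<Rightarrow> real \<Rightarrow> ennreal"
  assumes d: "DIM('a) \<ge> 2" and u: "norm u = 1" and \<Phi>: "case_prod \<Phi> \<in> borel_measurable borel"
  shows "(\<integral>\<^sup>+x. \<Phi> (u \<bullet> x) (x \<bullet> x) \<partial>lborel) =
    (\<integral>\<^sup>+q. \<integral>\<^sup>+s. ennreal (sqnorm_density (real DIM('a) - 1) (q - s\<^sup>2)) * \<Phi> s q \<partial>lborel \<partial>lborel)"
proof -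
  let ?w = "\<lambda>r. ennreal (sqnorm_density (real DIM('a) - 1) r)"
  obtain b :: 'a where b: "b \<in> Basis"
    using nonempty_Basis by blast
  define I where "I = Basis - {b}"
  have card_I: "card I = DIM('a) - 1"
    using b by (simp add: I_def card_Diff_singleton)
  have I: "finite I" "I \<noteq> {}"
  proof -
    show "finite I"
      by (simp add: I_def)
    show "I \<noteq> {}"
    proof
      assume "I = {}"
      with card_I d show False
        by simp
    qed
  qed
  have real_card_I: "real (card I) = real DIM('a) - 1"
    using card_I d by simp
  have \<Phi>_pair[measurable]: "(\<lambda>p. \<Phi> (fst p) (snd p)) \<in> borel_measurable (M \<Otimes>\<^sub>M N)"
    if "M = lborel" "N = lborel" for M N :: "real measure"
    unfolding that by (rule borel_measurable_case_prod_compose[OF \<Phi>]) measurable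
  have \<Phi>_shift[measurable]: "(\<lambda>r. \<Phi> s (s\<^sup>2 + r)) \<in> borel_measurable borel" for s
    by (rule borel_measurable_case_prod_compose[OF \<Phi>]) measurable
  have "(\<integral>\<^sup>+x. \<Phi> (u \<bullet> x) (x \<bullet> x) \<partial>lborel) = (\<integral>\<^sup>+x. \<Phi> (b \<bullet> x) (x \<bullet> x) \<partial>lborel)"
    using b by (intro nn_integral_lborel_inner_unit_invariant[OF u _ \<Phi>]) simp
  also have "\<dots> = (\<integral>\<^sup>+s. \<integral>\<^sup>+y. \<Phi> s (s\<^sup>2 + (\<Sum>i\<in>I. (y i)\<^sup>2)) \<partial>(\<Pi>\<^sub>M i\<in>I. lborel) \<partial>lborel)"
    unfolding I_def using b \<Phi> by (rule nn_integral_lborel_Basis_split)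
  also have "\<dots> = (\<integral>\<^sup>+s. \<integral>\<^sup>+r. ?w r * \<Phi> s (s\<^sup>2 + r) \<partial>lborel \<partial>lborel)"
  proof (rule nn_integral_cong)
    fix s :: real
    have "(\<integral>\<^sup>+y. \<Phi> s (s\<^sup>2 + (\<Sum>i\<in>I. (y i)\<^sup>2)) \<partial>(\<Pi>\<^sub>M i\<in>I. lborel)) =
        (\<integral>\<^sup>+r. \<Phi> s (s\<^sup>2 + r) \<partial>distr (\<Pi>\<^sub>M i\<in>I. lborel) borel (\<lambda>y. \<Sum>i\<in>I. (y i)\<^sup>2))"
      by (rule nn_integral_distr[symmetric]) measurable
    also have "\<dots> = (\<integral>\<^sup>+r. \<Phi> s (s\<^sup>2 + r) \<partial>density lborel ?w)"
      by (simp only: distr_PiM_sum_squares[OF I] real_card_I)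
    also have "\<dots> = (\<integral>\<^sup>+r. ?w r * \<Phi> s (s\<^sup>2 + r) \<partial>lborel)"
      by (rule nn_integral_density) measurable
    finally show "(\<integral>\<^sup>+y. \<Phi> s (s\<^sup>2 + (\<Sum>i\<in>I. (y i)\<^sup>2)) \<partial>(\<Pi>\<^sub>M i\<in>I. lborel)) =
        (\<integral>\<^sup>+r. ?w r * \<Phi> s (s\<^sup>2 + r) \<partial>lborel)" .
  qed
  also have "\<dots> = (\<integral>\<^sup>+s. \<integral>\<^sup>+q. ?w (q - s\<^sup>2) * \<Phi> s q \<partial>lborel \<partial>lborel)"
  proof (rule nn_integral_cong)
    fix s :: real
    show "(\<integral>\<^sup>+r. ?w r * \<Phi> s (s\<^sup>2 + r) \<partial>lborel) = (\<integral>\<^sup>+q. ?w (q - s\<^sup>2) * \<Phi> s q \<partial>lborel)"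
      using nn_integral_real_affine[of "\<lambda>r. ?w r * \<Phi> s (s\<^sup>2 + r)" 1 "- s\<^sup>2"] by simp
  qed
  also have "\<dots> = (\<integral>\<^sup>+q. \<integral>\<^sup>+s. ?w (q - s\<^sup>2) * \<Phi> s q \<partial>lborel \<partial>lborel)"
    by (rule lborel_pair.Fubini'[symmetric]) measurable
  finally show ?thesis .
qed

lemma sqnorm_density_scale_chord:
  assumes q: "q > 0"
  shows "sqnorm_density n (q * (1 - t\<^sup>2)) =
    n * unit_ball_vol n / 2 * q powr (n / 2 - 1) * (indicator {-1<..<1} t * (1 - t\<^sup>2) powr (n / 2 - 1))"
proof (cases "t \<in> {-1<..<1}")
  case True
  then have "1 - t\<^sup>2 > 0"
    by (simp add: abs_square_less_1 abs_less_iff)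
  then show ?thesis
    using True q by (simp add: sqnorm_density_def powr_mult)
next
  case False
  then have "1 \<le> \<bar>t\<bar>"
    by auto
  then have "q * (1 - t\<^sup>2) \<le> 0"
    using one_le_power[of "\<bar>t\<bar>" 2] q by (simp add: mult_nonneg_nonpos)
  then show ?thesis
    using False by (simp add: sqnorm_density_def)
qed

lemma nn_integral_sqnorm_density_chord:
  fixes g :: "real \<Rightarrow> ennreal" and n q :: real
  assumes g[measurable]: "g \<in> borel_measurable borel" and n: "n \<ge> 0" and q: "q > 0"
  shows "(\<integral>\<^sup>+s. ennreal (sqnorm_density n (q - s\<^sup>2)) * g (s / sqrt q) \<partial>lborel) =
    ennreal (n * unit_ball_vol n / 2 * q powr ((n - 1) / 2)) *
    (\<integral>\<^sup>+t. ennreal (indicator {-1<..<1} t * (1 - t\<^sup>2) powr (n / 2 - 1)) * g t \<partial>lborel)"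
proof -
  define c where "c = n * unit_ball_vol n / 2"
  have c: "c \<ge> 0"
    using n by (simp add: c_def)
  have "(\<integral>\<^sup>+s. ennreal (sqnorm_density n (q - s\<^sup>2)) * g (s / sqrt q) \<partial>lborel) =
      ennreal (sqrt q) * (\<integral>\<^sup>+t. ennreal (sqnorm_density n (q - (sqrt q * t)\<^sup>2)) * g (sqrt q * t / sqrt q) \<partial>lborel)"
    using nn_integral_real_affine[of "\<lambda>s. ennreal (sqnorm_density n (q - s\<^sup>2)) * g (s / sqrt q)" "sqrt q" 0] q
    by simp
  also have "\<dots> = ennreal (sqrt q) * (\<integral>\<^sup>+t. ennreal (c * q powr (n / 2 - 1)) *
      (ennreal (indicator {-1<..<1} t * (1 - t\<^sup>2) powr (n / 2 - 1)) * g t) \<partial>lborel)"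
  proof (rule arg_cong2[where f="(*)"], rule refl, rule nn_integral_cong)
    fix t :: real
    have q_chord: "q - (sqrt q * t)\<^sup>2 = q * (1 - t\<^sup>2)"
      using q by (simp add: power_mult_distrib algebra_simps)
    have "sqnorm_density n (q * (1 - t\<^sup>2)) =
        c * q powr (n / 2 - 1) * (indicator {-1<..<1} t * (1 - t\<^sup>2) powr (n / 2 - 1))"
      unfolding c_def by (rule sqnorm_density_scale_chord[OF q])
    then have "ennreal (sqnorm_density n (q * (1 - t\<^sup>2))) =
        ennreal (c * q powr (n / 2 - 1)) * ennreal (indicator {-1<..<1} t * (1 - t\<^sup>2) powr (n / 2 - 1))"
      using c by (simp add: ennreal_mult')
    then show "ennreal (sqnorm_density n (q - (sqrt q * t)\<^sup>2)) * g (sqrt q * t / sqrt q) =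
        ennreal (c * q powr (n / 2 - 1)) * (ennreal (indicator {-1<..<1} t * (1 - t\<^sup>2) powr (n / 2 - 1)) * g t)"
      using q by (simp add: q_chord mult.assoc)
  qed
  also have "\<dots> = ennreal (sqrt q) * ennreal (c * q powr (n / 2 - 1)) *
      (\<integral>\<^sup>+t. ennreal (indicator {-1<..<1} t * (1 - t\<^sup>2) powr (n / 2 - 1)) * g t \<partial>lborel)"
    by (subst nn_integral_cmult) (simp_all add: mult.assoc)
  also have "ennreal (sqrt q) * ennreal (c * q powr (n / 2 - 1)) = ennreal (c * q powr ((n - 1) / 2))"
  proof -
    have "ennreal (sqrt q) * ennreal (c * q powr (n / 2 - 1)) = ennreal (sqrt q * (c * q powr (n / 2 - 1)))"
      using q by (simp add: ennreal_mult')
    also have "sqrt q * (c * q powr (n / 2 - 1)) = c * q powr ((n - 1) / 2)"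
      using q by (simp add: powr_half_sqrt[symmetric] powr_add[symmetric] diff_divide_distrib)
    finally show ?thesis .
  qed
  finally show ?thesis
    by (simp add: c_def)
qed

section \<open>The surface measure of the sphere\<close>

lemma mult_unit_ball_vol:
  assumes "n > 0"
  shows "n * unit_ball_vol n = 2 * pi powr (n / 2) / Gamma (n / 2)"
proof -
  have Gamma_succ: "Gamma (n / 2 + 1) = n / 2 * Gamma (n / 2)"
    using assms by (subst Gamma_plus1) auto
  have "n * unit_ball_vol n = n / (n / 2) * (pi powr (n / 2) / Gamma (n / 2))"
    unfolding unit_ball_vol_def Gamma_succ by simp
  also have "n / (n / 2) = 2"
    using assms by simp
  finally show ?thesis
    by simp
qed

lemma space_sphere_surface: "space (sphere_surface :: 'a::euclidean_space measure) = sphere 0 1"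
  unfolding sphere_surface_def space_distr space_restrict_space by simp

lemma borel_measurable_sphere_surfaceI:
  fixes f :: "'a::euclidean_space \<Rightarrow> 'b::topological_space"
  assumes "f \<in> borel_measurable borel"
  shows "f \<in> borel_measurable (sphere_surface :: 'a measure)"
proof -
  have "sets (sphere_surface :: 'a measure) = sets (restrict_space borel (sphere 0 1))"
    unfolding sphere_surface_def by (rule sets_distr)
  moreover have "f \<in> borel_measurable (restrict_space borel (sphere (0::'a) 1))"
    using assms by (rule measurable_restrict_space1)
  ultimately show ?thesis
    using measurable_cong_sets by blast
qed

lemma nn_integral_sphere_surface:
  fixes g :: "'a::euclidean_space \<Rightarrow> ennreal"
  assumes g[measurable]: "g \<in> borel_measurable borel"
  shows "(\<integral>\<^sup>+x. g x \<partial>sphere_surface) =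
    ennreal DIM('a) * (\<integral>\<^sup>+x. indicator (ball 0 1 - {0}) x * g ((1 / norm x) *\<^sub>R x) \<partial>lborel)"
proof -
  define M where "M = density (restrict_space lborel (ball 0 1 - {0::'a})) (\<lambda>_. ennreal DIM('a))"
  define T :: "'a \<Rightarrow> 'a" where "T = (\<lambda>x. (1 / norm x) *\<^sub>R x)"
  have [measurable]: "ball (0::'a) 1 - {0} \<in> sets borel"
    by auto
  have T_borel[measurable]: "T \<in> borel_measurable borel"
    unfolding T_def by measurable
  have T_measurable: "T \<in> measurable M (restrict_space borel (sphere 0 1))"
  proof (rule measurable_restrict_space2)
    show "T \<in> space M \<rightarrow> sphere 0 1"
      by (auto simp: M_def T_def)
    have "T \<in> measurable (restrict_space lborel (ball 0 1 - {0})) borel"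
      by (rule measurable_restrict_space1) measurable
    then show "T \<in> borel_measurable M"
      by (simp add: M_def)
  qed
  have "(\<integral>\<^sup>+x. g x \<partial>sphere_surface) = (\<integral>\<^sup>+x. g x \<partial>distr M (restrict_space borel (sphere 0 1)) T)"
    by (simp add: sphere_surface_def M_def T_def)
  also have "\<dots> = (\<integral>\<^sup>+x. g (T x) \<partial>M)"
    by (rule nn_integral_distr[OF T_measurable]) (use measurable_restrict_space1[OF g] in simp)
  also have "\<dots> = (\<integral>\<^sup>+x. ennreal DIM('a) * g (T x) \<partial>restrict_space lborel (ball 0 1 - {0}))"
    unfolding M_def by (rule nn_integral_density) (auto intro!: measurable_restrict_space1)
  also have "\<dots> = (\<integral>\<^sup>+x. ennreal DIM('a) * g (T x) * indicator (ball 0 1 - {0}) x \<partial>lborel)"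
    by (rule nn_integral_restrict_space) simp
  also have "\<dots> = ennreal DIM('a) * (\<integral>\<^sup>+x. indicator (ball 0 1 - {0}) x * g (T x) \<partial>lborel)"
    by (subst nn_integral_cmult[symmetric]) (simp_all add: mult_ac)
  finally show ?thesis
    by (simp add: T_def)
qed

lemma nn_integral_sphere_surface_radial:
  fixes u :: "'a::euclidean_space" and g :: "real \<Rightarrow> ennreal"
  assumes g[measurable]: "g \<in> borel_measurable borel"
  shows "(\<integral>\<^sup>+x. g (u \<bullet> x) \<partial>sphere_surface) =
    ennreal DIM('a) * (\<integral>\<^sup>+x. indicator {0<..<1} (x \<bullet> x) * g (u \<bullet> x / sqrt (x \<bullet> x)) \<partial>lborel)"
proof -
  have "indicator (ball 0 1 - {0}) x * g (u \<bullet> ((1 / norm x) *\<^sub>R x)) =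
      indicator {0<..<1} (x \<bullet> x) * g (u \<bullet> x / sqrt (x \<bullet> x))" for x :: 'a
  proof (cases "x \<in> ball 0 1 - {0}")
    case True
    then have "x \<bullet> x \<in> {0<..<1}"
      by (auto simp: dot_square_norm power_less_one_iff)
    moreover have "sqrt (x \<bullet> x) = norm x"
      by (simp add: norm_eq_sqrt_inner)
    ultimately show ?thesis
      using True by simp
  next
    case False
    then have "x \<bullet> x \<notin> {0<..<1}"
      by (auto simp: dot_square_norm power_less_one_iff)
    then show ?thesis
      using False by simp
  qed
  moreover have "(\<lambda>x. g (u \<bullet> x)) \<in> borel_measurable borel"
    by measurable
  ultimately show ?thesis
    by (simp only: nn_integral_sphere_surface)
qed

lemma nn_integral_powr_Ioo_0_1:
  fixes c e :: real
  assumes "c \<ge> 0" "e > -1"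
  shows "(\<integral>\<^sup>+q. ennreal (indicator {0<..<1} q * (c * q powr e)) \<partial>lborel) = ennreal (c / (e + 1))"
proof -
  have "((\<lambda>q. c * q powr e) has_integral (c * (1 powr (e + 1) / (e + 1)))) {0..1}"
    using assms by (intro has_integral_mult_right has_integral_powr_from_0) auto
  then have "((\<lambda>q. c * q powr e) has_integral (c / (e + 1))) {0..1}"
    by simp
  then show ?thesis
    unfolding nn_integral_indicator_Ioo_eq_Icc
    by (rule nn_integral_has_integral_lebesgue[rotated]) (use assms in simp)
qed

text \<open>The Funk--Hecke formula for functions of a single coordinate; the constant is the area of
  the unit sphere in \<open>\<real>\<^bsup>d - 1\<^esup>\<close>.\<close>
lemma nn_integral_sphere_surface_inner:
  fixes u :: "'a::euclidean_space" and g :: "real \<Rightarrow> ennreal"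
  assumes d: "DIM('a) \<ge> 2" and u: "norm u = 1" and g[measurable]: "g \<in> borel_measurable borel"
  defines "\<beta> \<equiv> (real DIM('a) - 1) / 2"
  shows "(\<integral>\<^sup>+x. g (u \<bullet> x) \<partial>sphere_surface) = ennreal (2 * pi powr \<beta> / Gamma \<beta>) *
    (\<integral>\<^sup>+t. ennreal (indicator {-1<..<1} t * (1 - t\<^sup>2) powr (\<beta> - 1)) * g t \<partial>lborel)"
proof -
  define n where "n = real DIM('a) - 1"
  define \<Phi> where "\<Phi> s q = indicator {0<..<1} q * g (s / sqrt q)" for s q :: real
  define K where "K = (\<integral>\<^sup>+t. ennreal (indicator {-1<..<1} t * (1 - t\<^sup>2) powr (\<beta> - 1)) * g t \<partial>lborel)"
  define c where "c = n * unit_ball_vol n / 2"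
  have n: "n \<ge> 1" "\<beta> = n / 2" "real DIM('a) = n + 1"
    using d by (simp_all add: n_def \<beta>_def)
  have \<Phi>_measurable: "case_prod \<Phi> \<in> borel_measurable borel"
    unfolding \<Phi>_def by (subst borel_prod[symmetric]) measurable
  have "(\<integral>\<^sup>+x. g (u \<bullet> x) \<partial>sphere_surface) = ennreal DIM('a) * (\<integral>\<^sup>+x. \<Phi> (u \<bullet> x) (x \<bullet> x) \<partial>lborel)"
    unfolding \<Phi>_def by (rule nn_integral_sphere_surface_radial[OF g])
  also have "(\<integral>\<^sup>+x. \<Phi> (u \<bullet> x) (x \<bullet> x) \<partial>lborel) =
      (\<integral>\<^sup>+q. \<integral>\<^sup>+s. ennreal (sqnorm_density n (q - s\<^sup>2)) * \<Phi> s q \<partial>lborel \<partial>lborel)"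
    unfolding n_def by (rule nn_integral_lborel_inner_sqnorm[OF d u \<Phi>_measurable])
  also have "\<dots> = (\<integral>\<^sup>+q. ennreal (indicator {0<..<1} q * (c * q powr ((n - 1) / 2))) * K \<partial>lborel)"
  proof (rule nn_integral_cong)
    fix q :: real
    show "(\<integral>\<^sup>+s. ennreal (sqnorm_density n (q - s\<^sup>2)) * \<Phi> s q \<partial>lborel) =
        ennreal (indicator {0<..<1} q * (c * q powr ((n - 1) / 2))) * K"
    proof (cases "q \<in> {0<..<1}")
      case True
      then show ?thesis
        using nn_integral_sqnorm_density_chord[OF g, of n q] n(1) by (simp add: \<Phi>_def K_def c_def n(2))
    qed (simp add: \<Phi>_def)
  qed
  also have "\<dots> = (\<integral>\<^sup>+q. ennreal (indicator {0<..<1} q * (c * q powr ((n - 1) / 2))) \<partial>lborel) * K"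
    by (rule nn_integral_multc) measurable
  also have "(\<integral>\<^sup>+q. ennreal (indicator {0<..<1} q * (c * q powr ((n - 1) / 2))) \<partial>lborel) =
      ennreal (c / ((n - 1) / 2 + 1))"
    using n(1) by (intro nn_integral_powr_Ioo_0_1) (simp_all add: c_def)
  also have "ennreal DIM('a) * (ennreal (c / ((n - 1) / 2 + 1)) * K) = ennreal (2 * pi powr \<beta> / Gamma \<beta>) * K"
  proof -
    have "real DIM('a) * (c / ((n - 1) / 2 + 1)) = n * unit_ball_vol n"
      using n by (simp add: c_def field_simps)
    also have "\<dots> = 2 * pi powr \<beta> / Gamma \<beta>"
      using n(1) by (simp add: mult_unit_ball_vol n(2))
    finally have "ennreal DIM('a) * ennreal (c / ((n - 1) / 2 + 1)) = ennreal (2 * pi powr \<beta> / Gamma \<beta>)"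
      by (simp add: ennreal_mult'[symmetric])
    then show ?thesis
      by (simp add: mult.assoc[symmetric])
  qed
  finally show ?thesis
    unfolding K_def .
qed

section \<open>Beta integrals\<close>

lemma nn_integral_Beta:
  fixes a b :: real
  assumes "a > 0" "b > 0"
  shows "(\<integral>\<^sup>+x. ennreal (indicator {0<..<1} x * (x powr (a - 1) * (1 - x) powr (b - 1))) \<partial>lborel) =
    ennreal (Beta a b)"
  unfolding nn_integral_indicator_Ioo_eq_Icc
  by (rule nn_integral_has_integral_lebesgue[OF _ has_integral_Beta_real[OF assms]]) auto

lemma nn_integral_Beta_difference_quotient:
  fixes a b h :: real
  assumes a: "a > 0" and b: "b > 0" and h: "h > 0"
  shows "(\<integral>\<^sup>+x. ennreal (indicator {0<..<1} x *
      (x powr (a - 1) * (1 - x) powr (b - 1) * ((1 - x powr h) / h))) \<partial>lborel) =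
    ennreal ((Beta a b - Beta (a + h) b) / h)"
proof -
  have "((\<lambda>x. (x powr (a - 1) * (1 - x) powr (b - 1) - x powr (a + h - 1) * (1 - x) powr (b - 1)) / h)
      has_integral ((Beta a b - Beta (a + h) b) / h)) {0..1}"
    using a b h by (intro has_integral_divide has_integral_diff has_integral_Beta_real) auto
  moreover have "(x powr (a - 1) * (1 - x) powr (b - 1) - x powr (a + h - 1) * (1 - x) powr (b - 1)) / h =
      x powr (a - 1) * (1 - x) powr (b - 1) * ((1 - x powr h) / h)" for x :: real
  proof (cases "x = 0")
    case False
    have "x powr (a + h - 1) = x powr (a - 1) * x powr h"
      by (simp add: powr_add[symmetric] algebra_simps)
    then show ?thesis
      by (simp add: field_simps)
  qed simp
  ultimately have "((\<lambda>x. x powr (a - 1) * (1 - x) powr (b - 1) * ((1 - x powr h) / h))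
      has_integral ((Beta a b - Beta (a + h) b) / h)) {0..1}"
    by simp
  moreover have "0 \<le> x powr (a - 1) * (1 - x) powr (b - 1) * ((1 - x powr h) / h)" if "x \<in> {0..1}" for x
    using that h by (intro mult_nonneg_nonneg divide_nonneg_pos) (auto intro: powr_le1)
  ultimately show ?thesis
    unfolding nn_integral_indicator_Ioo_eq_Icc by (intro nn_integral_has_integral_lebesgue)
qed

lemma one_minus_powr_div_le_half:
  fixes x h :: real
  assumes "0 < x" "x \<le> 1" "h > 0"
  shows "(1 - x powr h) / h \<le> (1 - x powr (h / 2)) / (h / 2)"
proof -
  define y where "y = x powr (h / 2)"
  have y: "0 < y" "y \<le> 1"
    using assms by (auto simp: y_def powr_le1)
  have "x powr h = y\<^sup>2"
    using assms by (simp add: y_def powr_realpow[symmetric] powr_powr)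
  then have "(1 - x powr h) / h = (1 - y) * (1 + y) / h"
    by (simp add: algebra_simps power2_eq_square)
  also have "\<dots> \<le> (1 - y) * 2 / h"
    using y assms by (intro divide_right_mono mult_left_mono) auto
  also have "\<dots> = (1 - x powr (h / 2)) / (h / 2)"
    by (simp add: y_def)
  finally show ?thesis .
qed

lemma LIMSEQ_dyadic_difference_quotient:
  fixes f :: "real \<Rightarrow> real"
  assumes "(f has_real_derivative D) (at x)"
  shows "(\<lambda>k. (f (x + (1/2)^k) - f x) / (1/2)^k) \<longlonglongrightarrow> D"
proof -
  have "((\<lambda>h. (f (x + h) - f x) / h) \<longlongrightarrow> D) (at 0)"
    using assms by (simp add: DERIV_def)
  moreover have "filterlim (\<lambda>k::nat. (1/2::real)^k) (at 0) sequentially"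
    by (auto simp: filterlim_at intro!: LIMSEQ_realpow_zero)
  ultimately show ?thesis
    using filterlim_compose by fastforce
qed

lemma LIMSEQ_one_minus_powr_dyadic:
  fixes x :: real
  assumes "x > 0"
  shows "(\<lambda>k. (1 - x powr (1/2)^k) / (1/2)^k) \<longlonglongrightarrow> - ln x"
proof -
  have "((\<lambda>t. x powr t) has_real_derivative x powr 0 * (1 * ln x + 0 * 0 / x)) (at 0)"
    using assms by (intro DERIV_powr derivative_intros) auto
  then have "((\<lambda>t. x powr t) has_real_derivative ln x) (at 0)"
    using assms by simp
  from LIMSEQ_dyadic_difference_quotient[OF this]
  have "(\<lambda>k. (x powr (1/2)^k - 1) / (1/2)^k) \<longlonglongrightarrow> ln x"
    using assms by simp
  then show ?thesis
    using tendsto_minus by (fastforce simp: minus_divide_left)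
qed

text \<open>Monotone convergence along the step sizes \<open>h = 2\<^sup>-\<^sup>k\<close>: the difference quotients
  \<open>(1 - x powr h) / h\<close> increase to \<open>- ln x\<close>, and their Beta integrals converge to \<open>-\<partial>\<^sub>a Beta a b\<close>.\<close>
lemma nn_integral_Beta_ln:
  fixes a b :: real
  assumes a: "a > 0" and b: "b > 0"
  shows "(\<integral>\<^sup>+x. ennreal (indicator {0<..<1} x * (x powr (a - 1) * (1 - x) powr (b - 1) * - ln x)) \<partial>lborel) =
    ennreal (Beta a b * (Digamma (a + b) - Digamma a))"
proof -
  define h :: "nat \<Rightarrow> real" where "h k = (1/2)^k" for k
  define w where "w x = indicator {0<..<1} x * (x powr (a - 1) * (1 - x) powr (b - 1))" for x :: real
  define F where "F k x = ennreal (w x * ((1 - x powr h k) / h k))" for k x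
  have h_pos: "h k > 0" for k
    by (simp add: h_def)
  have w_nonneg: "w x \<ge> 0" for x
    by (simp add: w_def)
  have "incseq F"
  proof (intro incseq_SucI le_funI)
    fix k x
    show "F k x \<le> F (Suc k) x"
    proof (cases "x \<in> {0<..<1}")
      case True
      then have "(1 - x powr h k) / h k \<le> (1 - x powr h (Suc k)) / h (Suc k)"
        using h_pos one_minus_powr_div_le_half[of x "h k"] by (simp add: h_def)
      then show ?thesis
        unfolding F_def by (intro ennreal_leI mult_left_mono w_nonneg)
    qed (simp add: F_def w_def)
  qed
  moreover have "F k \<in> borel_measurable lborel" for k
    unfolding F_def w_def by measurable
  moreover have "(\<lambda>k. F k x) \<longlonglongrightarrow> ennreal (w x * - ln x)" for x
  proof (cases "x \<in> {0<..<1}")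
    case True
    then have "(\<lambda>k. (1 - x powr h k) / h k) \<longlonglongrightarrow> - ln x"
      unfolding h_def by (intro LIMSEQ_one_minus_powr_dyadic) simp
    then show ?thesis
      unfolding F_def by (intro tendsto_ennrealI tendsto_mult tendsto_const)
  qed (simp add: F_def w_def)
  ultimately have lim_F: "(\<lambda>k. integral\<^sup>N lborel (F k)) \<longlonglongrightarrow> (\<integral>\<^sup>+x. ennreal (w x * - ln x) \<partial>lborel)"
    by (rule nn_integral_LIMSEQ)
  have "integral\<^sup>N lborel (F k) = ennreal ((Beta a b - Beta (a + h k) b) / h k)" for k
    using nn_integral_Beta_difference_quotient[OF a b h_pos] unfolding F_def w_def
    by (simp only: mult.assoc)
  moreover have "(\<lambda>k. (Beta a b - Beta (a + h k) b) / h k) \<longlonglongrightarrow> Beta a b * (Digamma (a + b) - Digamma a)"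
  proof -
    have "((\<lambda>s. Beta s b) has_real_derivative Beta a b * (Digamma a - Digamma (a + b))) (at a)"
      using a b by (intro has_field_derivative_Beta1) auto
    from tendsto_minus[OF LIMSEQ_dyadic_difference_quotient[OF this]] show ?thesis
      by (simp add: h_def minus_divide_left algebra_simps)
  qed
  ultimately have "(\<lambda>k. integral\<^sup>N lborel (F k)) \<longlonglongrightarrow> ennreal (Beta a b * (Digamma (a + b) - Digamma a))"
    by (simp add: tendsto_ennrealI)
  with lim_F have "(\<integral>\<^sup>+x. ennreal (w x * - ln x) \<partial>lborel) = ennreal (Beta a b * (Digamma (a + b) - Digamma a))"
    by (rule LIMSEQ_unique)
  then show ?thesis
    by (simp add: w_def mult.assoc)
qed

lemma chord_weight_affine:
  fixes x \<beta> \<kappa> :: real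
  assumes x: "0 < x" "x < 1"
  shows "2 * ((1 - (-1 + 2 * x)\<^sup>2) powr (\<beta> - 1) * (1 + (-1 + 2 * x)) powr \<kappa>) =
    2 powr (2 * \<beta> + \<kappa> - 1) * (x powr (\<beta> + \<kappa> - 1) * (1 - x) powr (\<beta> - 1))"
proof -
  have chord: "1 - (-1 + 2 * x)\<^sup>2 = 4 * (x * (1 - x))" and shift: "1 + (-1 + 2 * x) = 2 * x"
    by (simp_all add: power2_eq_square algebra_simps)
  have "(4::real) powr (\<beta> - 1) = (2 powr 2) powr (\<beta> - 1)"
    by simp
  also have "\<dots> = 2 powr (2 * (\<beta> - 1))"
    by (rule powr_powr)
  also have "2 * (\<beta> - 1) = 2 * \<beta> - 2"
    by simp
  finally have four: "(4::real) powr (\<beta> - 1) = 2 powr (2 * \<beta> - 2)" .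
  have "(2::real) powr (2 * \<beta> + \<kappa> - 1) = 2 powr (1 + (2 * \<beta> - 2) + \<kappa>)"
    by (simp add: algebra_simps)
  also have "\<dots> = 2 * (2 powr (2 * \<beta> - 2) * 2 powr \<kappa>)"
    by (simp only: powr_add powr_one mult.assoc)
  finally have two: "2 * (2 powr (2 * \<beta> - 2) * 2 powr \<kappa>) = (2::real) powr (2 * \<beta> + \<kappa> - 1)" ..
  have x_powr: "x powr (\<beta> - 1) * x powr \<kappa> = x powr (\<beta> + \<kappa> - 1)"
    by (simp add: powr_add[symmetric] algebra_simps)
  have "(4 * (x * (1 - x))) powr (\<beta> - 1) = 4 powr (\<beta> - 1) * (x * (1 - x)) powr (\<beta> - 1)"
    "(x * (1 - x)) powr (\<beta> - 1) = x powr (\<beta> - 1) * (1 - x) powr (\<beta> - 1)"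
    "(2 * x) powr \<kappa> = 2 powr \<kappa> * x powr \<kappa>"
    using x by (simp_all add: powr_mult)
  then have "2 * ((1 - (-1 + 2 * x)\<^sup>2) powr (\<beta> - 1) * (1 + (-1 + 2 * x)) powr \<kappa>) =
      2 * (2 powr (2 * \<beta> - 2) * (x powr (\<beta> - 1) * (1 - x) powr (\<beta> - 1)) * (2 powr \<kappa> * x powr \<kappa>))"
    by (simp only: chord shift four)
  also have "\<dots> = 2 * (2 powr (2 * \<beta> - 2) * 2 powr \<kappa>) * ((x powr (\<beta> - 1) * x powr \<kappa>) * (1 - x) powr (\<beta> - 1))"
    by (simp only: mult_ac)
  finally show ?thesis
    by (simp only: two x_powr)
qed

lemma nn_integral_chord_weight_eq_Beta_weight:
  fixes \<beta> \<kappa> :: real and h :: "real \<Rightarrow> real"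
  assumes h[measurable]: "h \<in> borel_measurable borel"
    and h_nonneg: "\<And>x. 0 < x \<Longrightarrow> x < 1 \<Longrightarrow> h x \<ge> 0"
  shows "(\<integral>\<^sup>+t. ennreal (indicator {-1<..<1} t * (1 - t\<^sup>2) powr (\<beta> - 1)) *
      ennreal ((1 + t) powr \<kappa> * h ((1 + t) / 2)) \<partial>lborel) =
    ennreal (2 powr (2 * \<beta> + \<kappa> - 1)) *
      (\<integral>\<^sup>+x. ennreal (indicator {0<..<1} x * (x powr (\<beta> + \<kappa> - 1) * (1 - x) powr (\<beta> - 1) * h x)) \<partial>lborel)"
    (is "_ = ennreal ?c * _")
proof -
  have "(\<integral>\<^sup>+t. ennreal (indicator {-1<..<1} t * (1 - t\<^sup>2) powr (\<beta> - 1)) *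
      ennreal ((1 + t) powr \<kappa> * h ((1 + t) / 2)) \<partial>lborel) =
    ennreal 2 * (\<integral>\<^sup>+x. ennreal (indicator {-1<..<1} (-1 + 2 * x) * (1 - (-1 + 2 * x)\<^sup>2) powr (\<beta> - 1)) *
      ennreal ((1 + (-1 + 2 * x)) powr \<kappa> * h ((1 + (-1 + 2 * x)) / 2)) \<partial>lborel)"
    by (subst nn_integral_real_affine[where c=2 and t="-1"]) auto
  also have "\<dots> = ennreal 2 * (\<integral>\<^sup>+x. ennreal (?c / 2) *
      ennreal (indicator {0<..<1} x * (x powr (\<beta> + \<kappa> - 1) * (1 - x) powr (\<beta> - 1) * h x)) \<partial>lborel)"
  proof (rule arg_cong2[where f="(*)"], rule refl, rule nn_integral_cong)
    fix x :: real
    show "ennreal (indicator {-1<..<1} (-1 + 2 * x) * (1 - (-1 + 2 * x)\<^sup>2) powr (\<beta> - 1)) *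
        ennreal ((1 + (-1 + 2 * x)) powr \<kappa> * h ((1 + (-1 + 2 * x)) / 2)) =
      ennreal (?c / 2) *
        ennreal (indicator {0<..<1} x * (x powr (\<beta> + \<kappa> - 1) * (1 - x) powr (\<beta> - 1) * h x))"
    proof (cases "x \<in> {0<..<1}")
      case True
      then have "h x \<ge> 0" "-1 + 2 * x \<in> {-1<..<1}"
        using h_nonneg by auto
      moreover have "(1 - (-1 + 2 * x)\<^sup>2) powr (\<beta> - 1) * ((1 + (-1 + 2 * x)) powr \<kappa> * h x) =
          ?c / 2 * (x powr (\<beta> + \<kappa> - 1) * (1 - x) powr (\<beta> - 1) * h x)"
        using chord_weight_affine[of x \<beta> \<kappa>] True by (simp add: field_simps)
      ultimately show ?thesis
        using True by (simp add: ennreal_mult'[symmetric] mult.assoc)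
    qed simp
  qed
  also have "(\<integral>\<^sup>+x. ennreal (?c / 2) *
      ennreal (indicator {0<..<1} x * (x powr (\<beta> + \<kappa> - 1) * (1 - x) powr (\<beta> - 1) * h x)) \<partial>lborel) =
    ennreal (?c / 2) *
      (\<integral>\<^sup>+x. ennreal (indicator {0<..<1} x * (x powr (\<beta> + \<kappa> - 1) * (1 - x) powr (\<beta> - 1) * h x)) \<partial>lborel)"
    by (rule nn_integral_cmult) measurable
  also have "ennreal 2 * (ennreal (?c / 2) *
      (\<integral>\<^sup>+x. ennreal (indicator {0<..<1} x * (x powr (\<beta> + \<kappa> - 1) * (1 - x) powr (\<beta> - 1) * h x)) \<partial>lborel)) =
    ennreal ?c *
      (\<integral>\<^sup>+x. ennreal (indicator {0<..<1} x * (x powr (\<beta> + \<kappa> - 1) * (1 - x) powr (\<beta> - 1) * h x)) \<partial>lborel)"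
    using ennreal_mult'[of 2 "?c / 2"] by (simp add: mult.assoc)
  finally show ?thesis .
qed

lemma diff_entropy_normalised:
  fixes f :: "'a \<Rightarrow> real"
  assumes f: "integrable M f" and f_ln_f: "integrable M (\<lambda>x. f x * ln (f x))"
    and f_nonneg: "\<And>x. x \<in> space M \<Longrightarrow> f x \<ge> 0" and Z_pos: "(\<integral>x. f x \<partial>M) > 0"
  shows "diff_entropy M (\<lambda>x. f x / (\<integral>y. f y \<partial>M)) =
    ln (\<integral>x. f x \<partial>M) - (\<integral>x. f x * ln (f x) \<partial>M) / (\<integral>x. f x \<partial>M)"
proof -
  define Z where "Z = (\<integral>x. f x \<partial>M)"
  have Z: "Z > 0"
    using Z_pos by (simp add: Z_def)
  have pointwise: "f x / Z * ln (f x / Z) = (f x * ln (f x) - ln Z * f x) / Z" if "x \<in> space M" for x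
  proof (cases "f x = 0")
    case False
    then have "f x > 0"
      using f_nonneg[OF that] by simp
    then show ?thesis
      using Z by (simp add: ln_div field_simps)
  qed simp
  have "diff_entropy M (\<lambda>x. f x / Z) = - (\<integral>x. (f x * ln (f x) - ln Z * f x) / Z \<partial>M)"
    unfolding diff_entropy_def using pointwise
    by (intro arg_cong[where f=uminus] Bochner_Integration.integral_cong) auto
  also have "(\<integral>x. (f x * ln (f x) - ln Z * f x) / Z \<partial>M) = ((\<integral>x. f x * ln (f x) \<partial>M) - ln Z * Z) / Z"
    using f f_ln_f by (simp add: Z_def)
  also have "- (((\<integral>x. f x * ln (f x) \<partial>M) - ln Z * Z) / Z) = ln Z - (\<integral>x. f x * ln (f x) \<partial>M) / Z"
    using Z by (simp add: field_simps)
  finally show ?thesis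
    by (simp add: Z_def)
qed

section \<open>The Power Spherical distribution\<close>

definition ps_normaliser :: "real \<Rightarrow> real \<Rightarrow> real" where
  "ps_normaliser \<alpha> \<beta> = 2 powr (\<alpha> + \<beta>) * pi powr \<beta> * Gamma \<alpha> / Gamma (\<alpha> + \<beta>)"

lemma ps_normaliser_pos: "\<alpha> > 0 \<Longrightarrow> \<beta> > 0 \<Longrightarrow> ps_normaliser \<alpha> \<beta> > 0"
  by (simp add: ps_normaliser_def)

lemma ps_normaliser_eq_Beta:
  fixes \<beta> \<kappa> :: real
  assumes "\<beta> > 0" "\<kappa> \<ge> 0"
  shows "2 * pi powr \<beta> / Gamma \<beta> * 2 powr (2 * \<beta> + \<kappa> - 1) =
    ps_normaliser (\<beta> + \<kappa>) \<beta> / Beta (\<beta> + \<kappa>) \<beta>"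
proof -
  have "Gamma \<beta> > 0" "Gamma (\<beta> + \<kappa>) > 0" "Gamma (\<beta> + \<kappa> + \<beta>) > 0"
    using assms by simp_all
  moreover have "(2::real) powr (\<beta> + \<kappa> + \<beta>) = 2 powr (1 + (2 * \<beta> + \<kappa> - 1))"
    by (simp add: algebra_simps)
  then have "2 * 2 powr (2 * \<beta> + \<kappa> - 1) = (2::real) powr (\<beta> + \<kappa> + \<beta>)"
    by (simp only: powr_add powr_one)
  ultimately show ?thesis
    by (simp add: ps_normaliser_def Beta_def field_simps)
qed

lemma ps_unnorm_nonneg: "ps_unnorm u \<kappa> x \<ge> 0"
  by (simp add: ps_unnorm_def)

lemma inner_unit_sphere_bounds:
  fixes u x :: "'a::euclidean_space"
  assumes "norm u = 1" "x \<in> sphere 0 1"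
  shows "-1 \<le> u \<bullet> x" "u \<bullet> x \<le> 1"
  using Cauchy_Schwarz_ineq2[of u x] assms by (simp_all add: abs_le_iff)

lemma nn_integral_ps_unnorm_mult:
  fixes u :: "'a::euclidean_space" and \<kappa> :: real and h :: "real \<Rightarrow> real"
  assumes d: "DIM('a) \<ge> 2" and u: "norm u = 1" and \<kappa>: "\<kappa> \<ge> 0"
    and h[measurable]: "h \<in> borel_measurable borel"
    and h_nonneg: "\<And>x. 0 < x \<Longrightarrow> x < 1 \<Longrightarrow> h x \<ge> 0"
  defines "\<beta> \<equiv> (real DIM('a) - 1) / 2"
  shows "(\<integral>\<^sup>+x. ennreal (ps_unnorm u \<kappa> x * h ((1 + u \<bullet> x) / 2)) \<partial>sphere_surface) =
    ennreal (ps_normaliser (\<beta> + \<kappa>) \<beta> / Beta (\<beta> + \<kappa>) \<beta>) *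
      (\<integral>\<^sup>+x. ennreal (indicator {0<..<1} x * (x powr (\<beta> + \<kappa> - 1) * (1 - x) powr (\<beta> - 1) * h x)) \<partial>lborel)"
proof -
  have \<beta>: "\<beta> > 0"
    using d by (simp add: \<beta>_def)
  have "(\<integral>\<^sup>+x. ennreal (ps_unnorm u \<kappa> x * h ((1 + u \<bullet> x) / 2)) \<partial>sphere_surface) =
      (\<integral>\<^sup>+x. (\<lambda>t. ennreal ((1 + t) powr \<kappa> * h ((1 + t) / 2))) (u \<bullet> x) \<partial>sphere_surface)"
    by (simp add: ps_unnorm_def)
  also have "\<dots> = ennreal (2 * pi powr \<beta> / Gamma \<beta>) *
      (\<integral>\<^sup>+t. ennreal (indicator {-1<..<1} t * (1 - t\<^sup>2) powr (\<beta> - 1)) *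
        ennreal ((1 + t) powr \<kappa> * h ((1 + t) / 2)) \<partial>lborel)"
    unfolding \<beta>_def by (rule nn_integral_sphere_surface_inner[OF d u]) measurable
  also have "\<dots> = ennreal (2 * pi powr \<beta> / Gamma \<beta>) * ennreal (2 powr (2 * \<beta> + \<kappa> - 1)) *
      (\<integral>\<^sup>+x. ennreal (indicator {0<..<1} x * (x powr (\<beta> + \<kappa> - 1) * (1 - x) powr (\<beta> - 1) * h x)) \<partial>lborel)"
    by (simp add: nn_integral_chord_weight_eq_Beta_weight[OF h h_nonneg] mult.assoc)
  also have "ennreal (2 * pi powr \<beta> / Gamma \<beta>) * ennreal (2 powr (2 * \<beta> + \<kappa> - 1)) =
      ennreal (2 * pi powr \<beta> / Gamma \<beta> * 2 powr (2 * \<beta> + \<kappa> - 1))"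
    by (rule ennreal_mult'[symmetric]) (use \<beta> in simp)
  also have "\<dots> = ennreal (ps_normaliser (\<beta> + \<kappa>) \<beta> / Beta (\<beta> + \<kappa>) \<beta>)"
    by (simp only: ps_normaliser_eq_Beta[OF \<beta> \<kappa>])
  finally show ?thesis .
qed

lemma integral_eq_of_nn_integral_eq:
  assumes "f \<in> borel_measurable M" "\<And>x. x \<in> space M \<Longrightarrow> f x \<ge> 0"
    and "(\<integral>\<^sup>+x. ennreal (f x) \<partial>M) = ennreal c" "c \<ge> 0"
  shows "integrable M f" "(\<integral>x. f x \<partial>M) = c"
  using nn_integral_eq_integrable[of f M c] assms by auto

lemma integral_ps_unnorm_mult:
  fixes u :: "'a::euclidean_space" and \<kappa> :: real and h :: "real \<Rightarrow> real"
  assumes d: "DIM('a) \<ge> 2" and u: "norm u = 1" and \<kappa>: "\<kappa> \<ge> 0"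
    and h[measurable]: "h \<in> borel_measurable borel" and h_nonneg: "\<And>x. 0 \<le> x \<Longrightarrow> x \<le> 1 \<Longrightarrow> h x \<ge> 0"
  defines "\<beta> \<equiv> (real DIM('a) - 1) / 2"
  assumes h_Beta: "(\<integral>\<^sup>+x. ennreal (indicator {0<..<1} x *
      (x powr (\<beta> + \<kappa> - 1) * (1 - x) powr (\<beta> - 1) * h x)) \<partial>lborel) = ennreal (Beta (\<beta> + \<kappa>) \<beta> * V)"
    and V: "V \<ge> 0"
  shows "integrable sphere_surface (\<lambda>x. ps_unnorm u \<kappa> x * h ((1 + u \<bullet> x) / 2))"
    and "(\<integral>x. ps_unnorm u \<kappa> x * h ((1 + u \<bullet> x) / 2) \<partial>sphere_surface) = ps_normaliser (\<beta> + \<kappa>) \<beta> * V"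
proof -
  have \<beta>: "\<beta> > 0"
    using d by (simp add: \<beta>_def)
  have B: "Beta (\<beta> + \<kappa>) \<beta> > 0"
    using \<beta> \<kappa> by (simp add: Beta_def)
  have N: "ps_normaliser (\<beta> + \<kappa>) \<beta> > 0"
    using \<beta> \<kappa> by (simp add: ps_normaliser_pos)
  have "(\<integral>\<^sup>+x. ennreal (ps_unnorm u \<kappa> x * h ((1 + u \<bullet> x) / 2)) \<partial>sphere_surface) =
      ennreal (ps_normaliser (\<beta> + \<kappa>) \<beta> / Beta (\<beta> + \<kappa>) \<beta>) * ennreal (Beta (\<beta> + \<kappa>) \<beta> * V)"
    using nn_integral_ps_unnorm_mult[OF d u \<kappa> h] h_nonneg h_Beta by (simp add: \<beta>_def)
  also have "\<dots> = ennreal (ps_normaliser (\<beta> + \<kappa>) \<beta> / Beta (\<beta> + \<kappa>) \<beta> * (Beta (\<beta> + \<kappa>) \<beta> * V))"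
    by (rule ennreal_mult'[symmetric]) (use N B in simp)
  also have "\<dots> = ennreal (ps_normaliser (\<beta> + \<kappa>) \<beta> * V)"
    using B by simp
  finally have nn: "(\<integral>\<^sup>+x. ennreal (ps_unnorm u \<kappa> x * h ((1 + u \<bullet> x) / 2)) \<partial>sphere_surface) =
      ennreal (ps_normaliser (\<beta> + \<kappa>) \<beta> * V)" .
  have "(\<lambda>x. ps_unnorm u \<kappa> x * h ((1 + u \<bullet> x) / 2)) \<in> borel_measurable sphere_surface"
    unfolding ps_unnorm_def by (intro borel_measurable_sphere_surfaceI) measurable
  moreover have "ps_unnorm u \<kappa> x * h ((1 + u \<bullet> x) / 2) \<ge> 0" if "x \<in> space sphere_surface" for x
    using inner_unit_sphere_bounds[OF u, of x] that h_nonneg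
    by (simp add: ps_unnorm_def space_sphere_surface)
  moreover have "ps_normaliser (\<beta> + \<kappa>) \<beta> * V \<ge> 0"
    using N V by simp
  ultimately show "integrable sphere_surface (\<lambda>x. ps_unnorm u \<kappa> x * h ((1 + u \<bullet> x) / 2))"
    and "(\<integral>x. ps_unnorm u \<kappa> x * h ((1 + u \<bullet> x) / 2) \<partial>sphere_surface) = ps_normaliser (\<beta> + \<kappa>) \<beta> * V"
    using integral_eq_of_nn_integral_eq nn by blast+
qed

lemma integral_ps_unnorm:
  fixes u :: "'a::euclidean_space" and \<kappa> :: real
  assumes d: "DIM('a) \<ge> 2" and u: "norm u = 1" and \<kappa>: "\<kappa> \<ge> 0"
  defines "\<beta> \<equiv> (real DIM('a) - 1) / 2"
  shows "integrable sphere_surface (ps_unnorm u \<kappa>)"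
    and "(\<integral>x. ps_unnorm u \<kappa> x \<partial>sphere_surface) = ps_normaliser (\<beta> + \<kappa>) \<beta>"
proof -
  have \<beta>: "\<beta> > 0"
    using d by (simp add: \<beta>_def)
  then have "\<beta> + \<kappa> > 0" "\<beta> > 0"
    using \<kappa> by simp_all
  from integral_ps_unnorm_mult[OF d u \<kappa>, of "\<lambda>_. 1" 1] nn_integral_Beta[OF this]
  show "integrable sphere_surface (ps_unnorm u \<kappa>)"
    and "(\<integral>x. ps_unnorm u \<kappa> x \<partial>sphere_surface) = ps_normaliser (\<beta> + \<kappa>) \<beta>"
    by (simp_all add: \<beta>_def)
qed

lemma integral_ps_unnorm_ln_half:
  fixes u :: "'a::euclidean_space" and \<kappa> :: real
  assumes d: "DIM('a) \<ge> 2" and u: "norm u = 1" and \<kappa>: "\<kappa> \<ge> 0"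
  defines "\<beta> \<equiv> (real DIM('a) - 1) / 2"
  shows "integrable sphere_surface (\<lambda>x. ps_unnorm u \<kappa> x * - ln ((1 + u \<bullet> x) / 2))"
    and "(\<integral>x. ps_unnorm u \<kappa> x * - ln ((1 + u \<bullet> x) / 2) \<partial>sphere_surface) =
      ps_normaliser (\<beta> + \<kappa>) \<beta> * (Digamma (\<beta> + \<kappa> + \<beta>) - Digamma (\<beta> + \<kappa>))"
proof -
  have \<beta>: "\<beta> > 0"
    using d by (simp add: \<beta>_def)
  then have \<alpha>: "\<beta> + \<kappa> > 0"
    using \<kappa> by simp
  have "(\<lambda>y::real. - ln y) \<in> borel_measurable borel"
    by measurable
  moreover have "- ln y \<ge> 0" if "0 \<le> y" "y \<le> 1" for y :: real
    using that by (cases "y = 0") (simp_all add: ln_le_zero_iff)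
  moreover have "Digamma (\<beta> + \<kappa> + \<beta>) - Digamma (\<beta> + \<kappa>) \<ge> 0"
    using Digamma_real_mono[OF \<alpha>, of "\<beta> + \<kappa> + \<beta>"] \<beta> by simp
  ultimately show "integrable sphere_surface (\<lambda>x. ps_unnorm u \<kappa> x * - ln ((1 + u \<bullet> x) / 2))"
    and "(\<integral>x. ps_unnorm u \<kappa> x * - ln ((1 + u \<bullet> x) / 2) \<partial>sphere_surface) =
      ps_normaliser (\<beta> + \<kappa>) \<beta> * (Digamma (\<beta> + \<kappa> + \<beta>) - Digamma (\<beta> + \<kappa>))"
    using integral_ps_unnorm_mult[OF d u \<kappa>, of "\<lambda>y. - ln y"] nn_integral_Beta_ln[OF \<alpha> \<beta>]
    by (simp_all add: \<beta>_def)
qed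

text \<open>At the antipode \<open>x = -u\<close> the density vanishes even for \<open>\<kappa> = 0\<close>, since \<open>0 powr 0 = 0\<close>;
  both sides are then \<open>0\<close>.\<close>
lemma ps_unnorm_mult_ln:
  fixes u x :: "'a::euclidean_space"
  assumes "norm u = 1" "x \<in> sphere 0 1"
  shows "ps_unnorm u \<kappa> x * ln (ps_unnorm u \<kappa> x) =
    \<kappa> * (ln 2 * ps_unnorm u \<kappa> x - ps_unnorm u \<kappa> x * - ln ((1 + u \<bullet> x) / 2))"
proof -
  have "0 \<le> 1 + u \<bullet> x"
    using inner_unit_sphere_bounds[OF assms] by simp
  then consider "1 + u \<bullet> x = 0" | "1 + u \<bullet> x > 0"
    by linarith
  then show ?thesis
  proof cases
    case 2
    then show ?thesis
      by (simp add: ps_unnorm_def ln_powr ln_div algebra_simps)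
  qed (simp add: ps_unnorm_def)
qed

lemma integral_ps_unnorm_ln:
  fixes u :: "'a::euclidean_space" and \<kappa> :: real
  assumes d: "DIM('a) \<ge> 2" and u: "norm u = 1" and \<kappa>: "\<kappa> \<ge> 0"
  defines "\<beta> \<equiv> (real DIM('a) - 1) / 2"
  defines "N \<equiv> ps_normaliser (\<beta> + \<kappa>) \<beta>"
  shows "integrable sphere_surface (\<lambda>x. ps_unnorm u \<kappa> x * ln (ps_unnorm u \<kappa> x))"
    and "(\<integral>x. ps_unnorm u \<kappa> x * ln (ps_unnorm u \<kappa> x) \<partial>sphere_surface) =
      \<kappa> * (ln 2 * N - N * (Digamma (\<beta> + \<kappa> + \<beta>) - Digamma (\<beta> + \<kappa>)))"
proof -
  let ?f = "ps_unnorm u \<kappa>" and ?g = "\<lambda>x. ps_unnorm u \<kappa> x * - ln ((1 + u \<bullet> x) / 2)"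
  have f_ln_f: "?f x * ln (?f x) = \<kappa> * (ln 2 * ?f x - ?g x)" if "x \<in> space sphere_surface" for x
    using u that by (simp add: space_sphere_surface ps_unnorm_mult_ln)
  note f = integral_ps_unnorm[OF d u \<kappa>, folded \<beta>_def N_def]
  note g = integral_ps_unnorm_ln_half[OF d u \<kappa>, folded \<beta>_def N_def]
  have "integrable sphere_surface (\<lambda>x. \<kappa> * (ln 2 * ?f x - ?g x))"
    using f g by auto
  with f_ln_f show "integrable sphere_surface (\<lambda>x. ?f x * ln (?f x))"
    by (rule Bochner_Integration.integrable_cong[OF refl, THEN iffD2])
  have "(\<integral>x. ?f x * ln (?f x) \<partial>sphere_surface) = (\<integral>x. \<kappa> * (ln 2 * ?f x - ?g x) \<partial>sphere_surface)"
    using f_ln_f by (rule Bochner_Integration.integral_cong[OF refl])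
  then show "(\<integral>x. ?f x * ln (?f x) \<partial>sphere_surface) =
      \<kappa> * (ln 2 * N - N * (Digamma (\<beta> + \<kappa> + \<beta>) - Digamma (\<beta> + \<kappa>)))"
    using f g by simp
qed

theorem theorem15:
  fixes mu :: "'a::euclidean_space" and kappa :: real
  assumes "DIM('a) \<ge> 2"
    and "mu \<in> sphere 0 1"
    and "kappa \<ge> 0"
  shows "let d = real DIM('a);
             \<alpha> = (d - 1) / 2 + kappa;
             \<beta> = (d - 1) / 2;
             N = 2 powr (\<alpha> + \<beta>) * pi powr \<beta> * Gamma \<alpha> / Gamma (\<alpha> + \<beta>)
         in diff_entropy sphere_surface (ps_density mu kappa)
              = ln N - kappa * (ln 2 + Digamma \<alpha> - Digamma (\<alpha> + \<beta>))"
proof -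
  define \<beta> where "\<beta> = (real DIM('a) - 1) / 2"
  define N where "N = ps_normaliser (\<beta> + kappa) \<beta>"
  have mu: "norm mu = 1"
    using assms(2) by simp
  have "\<beta> > 0"
    using assms(1) by (simp add: \<beta>_def)
  then have N_pos: "N > 0"
    using assms(3) by (simp add: N_def ps_normaliser_pos)
  note f = integral_ps_unnorm[OF assms(1) mu assms(3), folded \<beta>_def N_def]
  note f_ln_f = integral_ps_unnorm_ln[OF assms(1) mu assms(3), folded \<beta>_def N_def]
  have ps_density_eq:
    "ps_density mu kappa = (\<lambda>x. ps_unnorm mu kappa x / (\<integral>y. ps_unnorm mu kappa y \<partial>sphere_surface))"
    by (simp add: fun_eq_iff ps_density_def)
  have "diff_entropy sphere_surface (ps_density mu kappa) =
      ln (\<integral>x. ps_unnorm mu kappa x \<partial>sphere_surface) -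
      (\<integral>x. ps_unnorm mu kappa x * ln (ps_unnorm mu kappa x) \<partial>sphere_surface) /
      (\<integral>x. ps_unnorm mu kappa x \<partial>sphere_surface)"
    unfolding ps_density_eq using f(1) f_ln_f(1)
    by (rule diff_entropy_normalised) (simp_all add: ps_unnorm_nonneg f(2) N_pos)
  also have "\<dots> = ln N - kappa * (ln 2 * N - N * (Digamma (\<beta> + kappa + \<beta>) - Digamma (\<beta> + kappa))) / N"
    by (simp only: f(2) f_ln_f(2))
  also have "\<dots> = ln N - kappa * (ln 2 + Digamma (\<beta> + kappa) - Digamma (\<beta> + kappa + \<beta>))"
    using N_pos by (simp add: field_simps)
  finally show ?thesis
    by (simp add: Let_def N_def ps_normaliser_def \<beta>_def)
qed

end
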